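(* Let $T$ be a tree with $n$ vertices. Then \[ \mathcal{V}_2^*(T^\ell,n-1)=\big\{E(P_{u,v})\cup\{ww\mid w\notin V(P_{u,v})\}\;\big|\; u\neq v \text{ are leaves of } T\big\}, \] where $P_{u,v}$ is the unique path in $T$ joining $u$ and $v$.
   Context: A $2$-matching of a graph (loops allowed) is a set $\mathcal{M}$ of edges such that every vertex is incident to at most two edges of $\mathcal{M}$ (a loop counts twice for incidence but as one edge). $T^\ell$ is $T$ with a loop $ww$ added at each vertex $w$; $\ell(\mathcal{M})$ is the set of loops in $\mathcal{M}$. A $2$-matching $\mathcal{M}$ of $T^\ell$ is minimal if there is no $2$-matching $\mathcal{M}'$ of $T^\ell$ with $|\mathcal{M}'|=|\mathcal{M}|$ and $\ell(\mathcal{M}')\subsetneq\ell(\mathcal{M})$; $\mathcal{V}_2^*(T^\ell,j)$ is the set of minimal $2$-matchings of $T^\ell$ with exactly $j$ edges. *)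

theory Defs
  imports Main
begin

text \<open>Undirected graphs on a vertex set V; an ordinary edge is a 2-element set {u,v},
  a loop at w is represented by the singleton {w}.\<close>

definition is_path :: "'a set set \<Rightarrow> 'a list \<Rightarrow> bool" where
  "is_path E p \<longleftrightarrow> p \<noteq> [] \<and> distinct p \<and>
     (\<forall>i. Suc i < length p \<longrightarrow> {p ! i, p ! Suc i} \<in> E)"

definition graph_connected :: "'a set \<Rightarrow> 'a set set \<Rightarrow> bool" where
  "graph_connected V E \<longleftrightarrow>
     (\<forall>u\<in>V. \<forall>v\<in>V. \<exists>p. is_path E p \<and> hd p = u \<and> last p = v)"

definition acyclic_graph :: "'a set set \<Rightarrow> bool" where
  "acyclic_graph E \<longleftrightarrow> \<not> (\<exists>p. length p \<ge> 3 \<and> is_path E p \<and> {last p, hd p} \<in> E)"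

definition is_tree :: "'a set \<Rightarrow> 'a set set \<Rightarrow> bool" where
  "is_tree V E \<longleftrightarrow> finite V \<and> V \<noteq> {} \<and>
     E \<subseteq> {{u, v} | u v. u \<in> V \<and> v \<in> V \<and> u \<noteq> v} \<and>
     graph_connected V E \<and> acyclic_graph E"

definition is_leaf :: "'a set \<Rightarrow> 'a set set \<Rightarrow> 'a \<Rightarrow> bool" where
  "is_leaf V E v \<longleftrightarrow> v \<in> V \<and> card {e \<in> E. v \<in> e} = 1"

definition path_edges :: "'a list \<Rightarrow> 'a set set" where
  "path_edges p = {{p ! i, p ! Suc i} | i. Suc i < length p}"

definition loop_edges :: "'a set \<Rightarrow> 'a set set \<Rightarrow> 'a set set" where
  "loop_edges V E = E \<union> (\<lambda>w. {w}) ` V"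

definition loops_of :: "'a set set \<Rightarrow> 'a set set" where
  "loops_of M = {e \<in> M. card e = 1}"

definition mdeg :: "'a set set \<Rightarrow> 'a \<Rightarrow> nat" where
  "mdeg M w = card {e \<in> M. w \<in> e \<and> card e = 2} + (if {w} \<in> M then 2 else 0)"

definition two_matching :: "'a set \<Rightarrow> 'a set set \<Rightarrow> 'a set set \<Rightarrow> bool" where
  "two_matching V E M \<longleftrightarrow> M \<subseteq> loop_edges V E \<and> (\<forall>w\<in>V. mdeg M w \<le> 2)"

definition min_two_matchings :: "'a set \<Rightarrow> 'a set set \<Rightarrow> nat \<Rightarrow> 'a set set set" where
  "min_two_matchings V E j = {M. two_matching V E M \<and> card M = j \<and>
     \<not> (\<exists>M'. two_matching V E M' \<and> card M' = card M \<and> loops_of M' \<subset> loops_of M)}"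

end

theory Submission
  imports Defs
begin

(* In a 2-matching of T^l the ordinary edges form a forest of maximum degree 2, that is, a
   disjoint union of paths, and no vertex carrying a loop lies on them. Counting vertices, n - 1
   edges leave room for at most one such path, with loops at all other vertices. Minimality then
   says that the vertex set of the path cannot be enlarged to that of another path; since paths
   in a tree are unique, this happens exactly when both ends are leaves. A matching consisting of
   loops only is never minimal: a single edge with loops off it has fewer loops. *)

section \<open>Paths\<close>

lemma is_path_rev: "is_path E p \<Longrightarrow> is_path E (rev p)"
  unfolding is_path_def
proof (intro conjI allI impI)
  fix i assume p: "p \<noteq> [] \<and> distinct p \<and> (\<forall>i. Suc i < length p \<longrightarrow> {p ! i, p ! Suc i} \<in> E)"
    and i: "Suc i < length (rev p)"
  then have "{p ! (length p - Suc (Suc i)), p ! Suc (length p - Suc (Suc i))} \<in> E" by simp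
  moreover have "Suc (length p - Suc (Suc i)) = length p - Suc i" using i by simp
  ultimately show "{rev p ! i, rev p ! Suc i} \<in> E" using i by (simp add: rev_nth insert_commute)
qed auto

lemma path_edges_rev: "path_edges (rev p) = path_edges p"
proof -
  have "path_edges (rev p) \<subseteq> path_edges p" for p :: "'a list"
  proof
    fix e assume "e \<in> path_edges (rev p)"
    then obtain i where i: "Suc i < length p" "e = {rev p ! i, rev p ! Suc i}"
      unfolding path_edges_def by auto
    define j where "j = length p - Suc (Suc i)"
    have "Suc j < length p" "Suc j = length p - Suc i" using i by (auto simp: j_def)
    then have "e = {p ! j, p ! Suc j}" using i by (simp add: rev_nth insert_commute j_def)
    with \<open>Suc j < length p\<close> show "e \<in> path_edges p" unfolding path_edges_def by blast
  qed
  from this[of p] this[of "rev p"] show ?thesis by auto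
qed

lemma path_edge_nth: "Suc i < length p \<Longrightarrow> {p ! i, p ! Suc i} \<in> path_edges p"
  unfolding path_edges_def by blast

lemma path_edges_subset: "is_path E p \<Longrightarrow> path_edges p \<subseteq> E"
  unfolding is_path_def path_edges_def by auto

lemma card_path_edge: "distinct p \<Longrightarrow> e \<in> path_edges p \<Longrightarrow> card e = 2"
  unfolding path_edges_def by (auto simp: nth_eq_iff_index_eq)

lemma path_edges_avoid: "w \<notin> set p \<Longrightarrow> e \<in> path_edges p \<Longrightarrow> w \<notin> e"
  unfolding path_edges_def by auto

lemma path_edges_eq_image: "path_edges p = (\<lambda>i. {p ! i, p ! Suc i}) ` {..<length p - 1}"
  unfolding path_edges_def by auto

lemma finite_path_edges: "finite (path_edges p)"
  by (simp add: path_edges_eq_image)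

lemma card_path_edges:
  assumes "distinct p" shows "card (path_edges p) = length p - 1"
proof -
  have "inj_on (\<lambda>i. {p ! i, p ! Suc i}) {..<length p - 1}"
  proof (rule inj_onI)
    fix i j assume ij: "i \<in> {..<length p - 1}" "j \<in> {..<length p - 1}"
      "{p ! i, p ! Suc i} = {p ! j, p ! Suc j}"
    then have "p ! i = p ! j \<or> p ! i = p ! Suc j" "p ! Suc i = p ! j \<or> p ! Suc i = p ! Suc j"
      by auto
    then show "i = j" using ij assms by (auto simp: nth_eq_iff_index_eq)
  qed
  then show ?thesis by (simp add: path_edges_eq_image card_image)
qed

lemma is_path_Cons:
  assumes "p \<noteq> []"
  shows "is_path E (x # p) \<longleftrightarrow> x \<notin> set p \<and> {x, hd p} \<in> E \<and> is_path E p"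
  using assms
  by (auto simp: is_path_def hd_conv_nth nth_Cons split: nat.splits)

lemma is_path_pair: "a \<noteq> b \<Longrightarrow> {a, b} \<in> E \<Longrightarrow> is_path E [a, b]"
  by (auto simp: is_path_def less_Suc_eq)

lemma is_path_mono: "is_path F p \<Longrightarrow> F \<subseteq> E \<Longrightarrow> is_path E p"
  unfolding is_path_def by blast

lemma two_le_length_path_iff: "is_path E p \<Longrightarrow> 2 \<le> length p \<longleftrightarrow> hd p \<noteq> last p"
  by (cases p; cases "tl p") (auto simp: is_path_def)

lemma Union_path_edges: "2 \<le> length p \<Longrightarrow> \<Union>(path_edges p) = set p"
proof (intro equalityI subsetI)
  fix x assume "x \<in> set p" "2 \<le> length p"
  then obtain k where k: "k < length p" "x = p ! k" by (auto simp: in_set_conv_nth)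
  have "Suc k < length p \<or> Suc (k - 1) = k \<and> Suc (k - 1) < length p"
    using \<open>2 \<le> length p\<close> k by auto
  then show "x \<in> \<Union>(path_edges p)" using k path_edge_nth by (metis UnionI insertCI)
qed (auto simp: path_edges_def)

lemma path_vertex_cases:
  assumes "w \<in> set p"
  obtains "w = hd p" | "w = last p" | k where "0 < k" "Suc k < length p" "w = p ! k"
proof -
  obtain k where k: "k < length p" "w = p ! k" using assms by (auto simp: in_set_conv_nth)
  then have "p \<noteq> []" by auto
  consider "k = 0" | "k = length p - 1" | "0 < k" "Suc k < length p" using k by linarith
  then show thesis using k that \<open>p \<noteq> []\<close> by cases (auto simp: hd_conv_nth last_conv_nth)
qed

lemma inner_path_edges:
  assumes "distinct p" "0 < k" "Suc k < length p"
  shows "{p ! (k - 1), p ! k} \<in> path_edges p" "{p ! k, p ! Suc k} \<in> path_edges p"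
    "{p ! (k - 1), p ! k} \<noteq> {p ! k, p ! Suc k}"
proof -
  show "{p ! (k - 1), p ! k} \<in> path_edges p" using path_edge_nth[of "k - 1" p] assms by simp
  show "{p ! k, p ! Suc k} \<in> path_edges p" using path_edge_nth[of k p] assms by simp
  have "p ! (k - 1) \<noteq> p ! k" "p ! (k - 1) \<noteq> p ! Suc k"
    using assms by (simp_all add: nth_eq_iff_index_eq)
  then show "{p ! (k - 1), p ! k} \<noteq> {p ! k, p ! Suc k}" by (metis insertCI insertE singletonD)
qed

lemma card_path_edges_at_vertex:
  assumes "distinct p" shows "card {e \<in> path_edges p. w \<in> e} \<le> 2"
proof (cases "w \<in> set p")
  case False
  then have "{e \<in> path_edges p. w \<in> e} = {}" using path_edges_avoid[of w p] by blast
  then show ?thesis by (metis card.empty zero_le)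
next
  case True
  then obtain k where k: "k < length p" "w = p ! k" by (auto simp: in_set_conv_nth)
  have "{e \<in> path_edges p. w \<in> e} \<subseteq> {{p ! (k - 1), p ! k}, {p ! k, p ! Suc k}}"
  proof
    fix e assume "e \<in> {e \<in> path_edges p. w \<in> e}"
    then obtain i where i: "Suc i < length p" "e = {p ! i, p ! Suc i}" "w \<in> e"
      unfolding path_edges_def by auto
    then have "i = k \<or> Suc i = k" using k assms by (auto simp: nth_eq_iff_index_eq)
    then show "e \<in> {{p ! (k - 1), p ! k}, {p ! k, p ! Suc k}}" using i by auto
  qed
  then have "card {e \<in> path_edges p. w \<in> e} \<le> card {{p ! (k - 1), p ! k}, {p ! k, p ! Suc k}}"
    by (rule card_mono[rotated]) simp
  also have "\<dots> \<le> 2" by (simp add: card_insert_if)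
  finally show ?thesis .
qed

section \<open>Acyclic graphs\<close>

lemma acyclic_mono: "acyclic_graph E \<Longrightarrow> F \<subseteq> E \<Longrightarrow> acyclic_graph F"
  unfolding acyclic_graph_def using is_path_mono by blast

lemma acyclic_no_chord:
  assumes "acyclic_graph E" "is_path E p" "2 \<le> j" "j < length p" "{hd p, p ! j} \<in> E"
  shows False
proof -
  let ?c = "take (Suc j) p"
  have "is_path E ?c" using assms(2,4) unfolding is_path_def by auto
  moreover have "3 \<le> length ?c" using assms(3,4) by simp
  moreover have "last ?c = p ! j" using assms(4) by (simp add: take_Suc_conv_app_nth)
  moreover have "hd ?c = hd p" using assms(4) by (cases p) auto
  ultimately show False using assms(1,5) unfolding acyclic_graph_def by (metis insert_commute)
qed

lemma acyclic_no_diverging_paths: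
  assumes "acyclic_graph E" "is_path E (a # p)" "is_path E (a # q)" "p \<noteq> []" "q \<noteq> []"
    "last p = last q" "hd p \<noteq> hd q"
  shows False
  using assms(2-7)
proof (induction q arbitrary: a p)
  case Nil then show ?case by simp
next
  case (Cons c q)
  have ac: "{a, c} \<in> E" using Cons.prems(2) is_path_Cons[of "c # q" E a] by simp
  show ?case
  proof (cases "c \<in> set p")
    case True
    then obtain i where i: "i < length p" "c = p ! i" by (auto simp: in_set_conv_nth)
    have "i \<noteq> 0" using i Cons.prems(3,6) by (cases p; cases i) auto
    then show False using acyclic_no_chord[OF assms(1) Cons.prems(1), of "Suc i"] i ac by auto
  next
    case False
    have "q \<noteq> []" using False Cons.prems(3,5) by auto
    have "is_path E (c # a # p)"
      using is_path_Cons[of "a # p" E c] Cons.prems(1,2) False ac by (auto simp: is_path_def insert_commute)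
    moreover have "is_path E (c # q)" using is_path_Cons[of "c # q" E a] Cons.prems(2) by simp
    moreover have "a \<noteq> hd q" using Cons.prems(2) \<open>q \<noteq> []\<close> by (cases q) (auto simp: is_path_def)
    ultimately show False using Cons.IH[of c "a # p"] Cons.prems(3,5) \<open>q \<noteq> []\<close> by simp
  qed
qed

lemma acyclic_path_unique:
  assumes "acyclic_graph E" "is_path E p" "is_path E q" "hd p = hd q" "last p = last q"
  shows "p = q"
  using assms(2-5)
proof (induction p arbitrary: q)
  case Nil then show ?case by (simp add: is_path_def)
next
  case (Cons a p)
  obtain q' where q: "q = a # q'"
    using Cons.prems(2,3) by (cases q) (simp_all add: is_path_def)
  consider "p = []" | "q' = []" | "p \<noteq> []" "q' \<noteq> []" by blast
  then show ?case
  proof cases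
    case 1
    then have "hd q = last q" using Cons.prems(3,4) by simp
    then have "\<not> 2 \<le> length q" using two_le_length_path_iff[OF Cons.prems(2)] by simp
    then show ?thesis using 1 q by (cases q') auto
  next
    case 2
    then have "hd (a # p) = last (a # p)" using Cons.prems(3,4) q by simp
    then have "\<not> 2 \<le> length (a # p)" using two_le_length_path_iff[OF Cons.prems(1)] by simp
    then show ?thesis using 2 q by (cases p) auto
  next
    case 3
    have "is_path E p" using is_path_Cons[of p E a] Cons.prems(1) 3 by simp
    moreover have "is_path E q'" using is_path_Cons[of q' E a] Cons.prems(2) q 3 by simp
    moreover have last_eq: "last p = last q'" using Cons.prems(4) q 3 by simp
    moreover have "hd p = hd q'"
      using acyclic_no_diverging_paths[OF assms(1) Cons.prems(1), of q'] Cons.prems(2) q 3 last_eq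
      by blast
    ultimately show ?thesis using Cons.IH[of q'] q by simp
  qed
qed

lemma leaf_in_path_is_end:
  assumes "is_leaf V E u" "is_path E p" "u \<in> set p"
  shows "u = hd p \<or> u = last p"
proof (rule ccontr)
  assume "\<not> (u = hd p \<or> u = last p)"
  then obtain k where k: "0 < k" "Suc k < length p" "u = p ! k"
    using path_vertex_cases[OF assms(3)] by metis
  have "distinct p" using assms(2) by (simp add: is_path_def)
  note edges = inner_path_edges[OF this k(1,2)]
  have "{p ! (k - 1), p ! k} \<in> {e \<in> E. u \<in> e}" "{p ! k, p ! Suc k} \<in> {e \<in> E. u \<in> e}"
    using edges(1,2) path_edges_subset[OF assms(2)] k(3) by auto
  moreover have "card {e \<in> E. u \<in> e} = 1" using assms(1) by (simp add: is_leaf_def)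
  ultimately show False using edges(3) by (metis card_1_singletonE singletonD)
qed

section \<open>Longest paths and forests\<close>

definition longest_path :: "'a set set \<Rightarrow> 'a list \<Rightarrow> bool" where
  "longest_path F p \<longleftrightarrow> is_path F p \<and> 2 \<le> length p \<and>
     (\<forall>q. is_path F q \<and> 2 \<le> length q \<longrightarrow> length q \<le> length p)"

lemma longest_path_rev: "longest_path F p \<Longrightarrow> longest_path F (rev p)"
  unfolding longest_path_def by (metis is_path_rev length_rev)

lemma longest_pathD:
  assumes "longest_path F p"
  shows "is_path F p" "2 \<le> length p" "is_path F q \<Longrightarrow> 2 \<le> length q \<Longrightarrow> length q \<le> length p"
  using assms by (simp_all add: longest_path_def)

lemma ex_longest_path:
  assumes "is_path F p0" "2 \<le> length p0" "finite (\<Union>F)"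
  obtains p where "longest_path F p"
proof -
  let ?P = "\<lambda>l. \<exists>p. is_path F p \<and> 2 \<le> length p \<and> length p = l"
  have "length p \<le> card (\<Union>F)" if "is_path F p" "2 \<le> length p" for p
  proof -
    have "length p = card (\<Union>(path_edges p))"
      using that by (simp add: Union_path_edges distinct_card is_path_def)
    also have "\<dots> \<le> card (\<Union>F)"
      using assms(3) path_edges_subset[OF that(1)] by (simp add: Union_mono card_mono)
    finally show ?thesis .
  qed
  then have bounded: "\<forall>l. ?P l \<longrightarrow> l \<le> card (\<Union>F)" by blast
  have "?P (length p0)" using assms(1,2) by blast
  then obtain l where "?P l" and greatest: "\<forall>l'. ?P l' \<longrightarrow> l' \<le> l"
    using Nat.ex_has_greatest_nat[OF _ bounded] by blast
  then obtain p where p: "is_path F p" "2 \<le> length p" "length p = l" by blast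
  have "longest_path F p" unfolding longest_path_def using p greatest by auto
  then show thesis by (rule that)
qed

lemma edge_at_path_hd:
  assumes "acyclic_graph F" "e \<in> F" "card e = 2" "is_path F p" "2 \<le> length p" "hd p \<in> e"
  obtains "e = {p ! 0, p ! 1}" | x where "is_path F (x # p)" "e = {hd p, x}"
proof -
  obtain x where x: "e = {hd p, x}" "x \<noteq> hd p"
    using assms(3,6) by (metis card_2_iff insertE insert_commute singletonD)
  have hd0: "hd p = p ! 0" using assms(5) by (cases p) auto
  show thesis
  proof (cases "x \<in> set p")
    case True
    then obtain j where j: "j < length p" "x = p ! j" by (auto simp: in_set_conv_nth)
    have "j \<noteq> 0" using j(2) x(2) hd0 by (cases "j = 0") simp_all
    moreover have "\<not> 2 \<le> j" using acyclic_no_chord[OF assms(1,4), of j] j x assms(2) by auto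
    ultimately have "j = 1" by simp
    then show thesis using that(1) x j hd0 by simp
  next
    case False
    moreover have "p \<noteq> []" using assms(5) by auto
    ultimately have "is_path F (x # p)"
      using is_path_Cons[of p F x] assms(2,4) x(1) by (simp add: insert_commute)
    then show thesis using that(2) x by blast
  qed
qed

lemma longest_path_hd_edge:
  assumes "acyclic_graph F" "e \<in> F" "card e = 2" "longest_path F p" "hd p \<in> e"
  shows "e = {p ! 0, p ! 1}"
proof -
  note p = longest_pathD[OF assms(4)]
  show ?thesis
  proof (cases rule: edge_at_path_hd[OF assms(1-3) p(1,2) assms(5)])
    case (2 x)
    then have "length (x # p) \<le> length p" using p(2) p(3)[OF 2(1)] by simp
    then show ?thesis by simp
  qed
qed

lemma finite_Union_card2: "finite F \<Longrightarrow> \<forall>e\<in>F. card e = 2 \<Longrightarrow> finite (\<Union>F)"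
  by (metis card.infinite finite_Union zero_neq_numeral)

text \<open>A nonempty forest has fewer edges than vertices: deleting the first edge of a longest path
  removes the end vertex of that path, which lies on no other edge.\<close>
lemma forest_card_bound:
  assumes "finite F" "\<forall>e\<in>F. card e = 2" "acyclic_graph F" "F \<noteq> {}"
  shows "card F + 1 \<le> card (\<Union>F)"
  using assms
proof (induction "card F" arbitrary: F rule: less_induct)
  case less
  have finU: "finite (\<Union>F)" using finite_Union_card2 less.prems by blast
  obtain a b where ab: "{a, b} \<in> F" "a \<noteq> b" using less.prems(2,4) by (metis card_2_iff ex_in_conv)
  obtain p where p: "longest_path F p"
    using ex_longest_path[OF is_path_pair[OF ab(2,1)] _ finU] by auto
  define e0 where "e0 = {p ! 0, p ! 1}"
  have e0F: "e0 \<in> F" using p unfolding longest_path_def is_path_def e0_def by auto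
  have hd_e0: "hd p \<in> e0" using longest_pathD(2)[OF p] by (cases p) (auto simp: e0_def)
  then have hd_F: "hd p \<in> \<Union>F" using e0F by blast
  have only_e0: "e = e0" if "e \<in> F" "hd p \<in> e" for e
    using longest_path_hd_edge[OF less.prems(3) that(1) _ p that(2)] less.prems(2) that(1) e0_def by simp
  define F' where "F' = F - {e0}"
  have cF: "card F = Suc (card F')" using card_Suc_Diff1[OF less.prems(1) e0F] unfolding F'_def by simp
  show ?case
  proof (cases "F' = {}")
    case True
    then have "F = {e0}" using e0F unfolding F'_def by blast
    then show ?thesis using less.prems(2) by simp
  next
    case False
    have "card F' + 1 \<le> card (\<Union>F')"
      using less.hyps[of F'] cF less.prems False acyclic_mono[of F F'] unfolding F'_def by auto
    also have "\<dots> \<le> card (\<Union>F - {hd p})"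
      using only_e0 finU unfolding F'_def by (intro card_mono) auto
    also have "\<dots> = card (\<Union>F) - 1" using hd_F finU by (simp add: card_Diff_singleton)
    finally show ?thesis using cF hd_F finU card_gt_0_iff by fastforce
  qed
qed

lemma longest_path_absorbs_incident_edges:
  assumes "acyclic_graph F" "\<forall>e\<in>F. card e = 2" "finite F" "\<And>w. card {e \<in> F. w \<in> e} \<le> 2"
    "longest_path F q" "e \<in> F" "w \<in> set q" "w \<in> e"
  shows "e \<in> path_edges q"
proof -
  note q = longest_pathD[OF assms(5)]
  show ?thesis
    using \<open>w \<in> set q\<close>
  proof (cases rule: path_vertex_cases)
    case 1
    then have "e = {q ! 0, q ! 1}"
      using longest_path_hd_edge[OF assms(1,6) _ assms(5)] assms(2,6,8) by simp
    then show ?thesis using path_edge_nth[of 0 q] q(2) by simp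
  next
    case 2
    then have "hd (rev q) \<in> e" using assms(8) q(2) by (simp add: hd_rev)
    then have "e = {rev q ! 0, rev q ! 1}"
      using longest_path_hd_edge[OF assms(1,6) _ longest_path_rev[OF assms(5)]] assms(2,6) by simp
    then show ?thesis using path_edge_nth[of 0 "rev q"] q(2) path_edges_rev[of q] by simp
  next
    case (3 k)
    show ?thesis
    proof (rule ccontr)
      assume "e \<notin> path_edges q"
      have "distinct q" using q(1) by (simp add: is_path_def)
      define e1 where "e1 = {q ! (k - 1), q ! k}"
      define e2 where "e2 = {q ! k, q ! Suc k}"
      have edges: "e1 \<in> path_edges q" "e2 \<in> path_edges q" "e1 \<noteq> e2"
        using inner_path_edges[OF \<open>distinct q\<close> 3(1,2)] unfolding e1_def e2_def by blast+
      let ?S = "{e1, e2, e}"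
      have "e \<noteq> e1" "e \<noteq> e2" using edges(1,2) \<open>e \<notin> path_edges q\<close> by blast+
      then have "card ?S = 3" using edges(3) by (simp add: card_insert_if)
      moreover have "?S \<subseteq> {e \<in> F. w \<in> e}"
        using edges(1,2) path_edges_subset[OF q(1)] assms(6,8) 3(3) unfolding e1_def e2_def by auto
      then have "card ?S \<le> card {e \<in> F. w \<in> e}" using assms(3) by (intro card_mono) auto
      ultimately show False using assms(4)[of w] by simp
    qed
  qed
qed

text \<open>The edges off a longest path form a forest sharing no vertex with the path, so unless it is
  empty it costs one more vertex than it has edges.\<close>
lemma linear_forest_path_or_sparse:
  assumes "finite F" "\<forall>e\<in>F. card e = 2" "acyclic_graph F" "\<And>w. card {e \<in> F. w \<in> e} \<le> 2"
    "F \<noteq> {}"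
  obtains q where "is_path F q" "2 \<le> length q" "F = path_edges q"
    | "card F + 2 \<le> card (\<Union>F)"
proof -
  have finU: "finite (\<Union>F)" using finite_Union_card2 assms(1,2) .
  obtain a b where ab: "{a, b} \<in> F" "a \<noteq> b" using assms(2,5) by (metis card_2_iff ex_in_conv)
  obtain q where q: "longest_path F q"
    using ex_longest_path[OF is_path_pair[OF ab(2,1)] _ finU] by auto
  note qD = longest_pathD[OF q]
  have dq: "distinct q" using qD(1) by (simp add: is_path_def)
  have PF: "path_edges q \<subseteq> F" using path_edges_subset[OF qD(1)] .
  define G where "G = F - path_edges q"
  have F: "F = path_edges q \<union> G" using PF unfolding G_def by blast
  show thesis
  proof (cases "G = {}")
    case True
    then show thesis using that(1) qD(1,2) F by simp
  next
    case False
    have disj: "set q \<inter> \<Union>G = {}"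
      using longest_path_absorbs_incident_edges[OF assms(3,2,1,4) q] unfolding G_def by blast
    have fin: "finite G" "finite (\<Union>G)" using assms(1) finU unfolding G_def by (auto intro: finite_subset)
    have "card G + 1 \<le> card (\<Union>G)"
      using forest_card_bound[OF fin(1) _ _ False] assms(2) acyclic_mono[OF assms(3)]
      unfolding G_def by blast
    moreover have "card F = (length q - 1) + card G"
    proof -
      have "card F = card (path_edges q) + card G"
        by (subst F, rule card_Un_disjoint[OF finite_path_edges fin(1)]) (simp add: G_def)
      then show ?thesis using card_path_edges[OF dq] by simp
    qed
    moreover have "card (\<Union>F) = length q + card (\<Union>G)"
    proof -
      have "\<Union>F = set q \<union> \<Union>G" using F Union_path_edges[OF qD(2)] by auto
      then show ?thesis using card_Un_disjoint[OF _ fin(2) disj] distinct_card[OF dq] by simp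
    qed
    ultimately show thesis using that(2) qD(2) by linarith
  qed
qed

section \<open>Trees and their 2-matchings\<close>

lemma is_treeD:
  assumes "is_tree V E"
  shows "finite V" "finite E" "\<forall>e\<in>E. card e = 2" "\<Union>E \<subseteq> V" "acyclic_graph E"
    "graph_connected V E"
proof -
  have E: "E \<subseteq> {{u, v} | u v. u \<in> V \<and> v \<in> V \<and> u \<noteq> v}" using assms by (simp add: is_tree_def)
  show "finite V" "acyclic_graph E" "graph_connected V E" using assms by (simp_all add: is_tree_def)
  show "\<forall>e\<in>E. card e = 2" "\<Union>E \<subseteq> V" using E by auto
  then have "E \<subseteq> Pow V" by blast
  then show "finite E" using \<open>finite V\<close> by (meson finite_Pow_iff finite_subset)
qed

lemma tree_path_subset:
  assumes "is_tree V E" "is_path E p" "2 \<le> length p"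
  shows "set p \<subseteq> V"
  using Union_path_edges[OF assms(3)] path_edges_subset[OF assms(2)] is_treeD(4)[OF assms(1)] by blast

lemma tree_ex_neighbour:
  assumes "is_tree V E" "2 \<le> card V" "w \<in> V"
  obtains x where "x \<noteq> w" "{w, x} \<in> E"
proof -
  have "card (V - {w}) \<noteq> 0" using assms(2,3) is_treeD(1)[OF assms(1)] by simp
  then obtain y where y: "y \<in> V" "y \<noteq> w" by (metis DiffE card.empty ex_in_conv singletonI)
  obtain r where r: "is_path E r" "hd r = w" "last r = y"
    using is_treeD(6)[OF assms(1)] assms(3) y(1) unfolding graph_connected_def by blast
  have "2 \<le> length r" using two_le_length_path_iff[OF r(1)] r(2,3) y(2) by simp
  then have "{r ! 0, r ! 1} \<in> E" "r ! 1 \<noteq> r ! 0" "r ! 0 = w"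
    using r(1,2) by (auto simp: is_path_def hd_conv_nth nth_eq_iff_index_eq)
  then show thesis using that by blast
qed

definition path_matching :: "'a set \<Rightarrow> 'a list \<Rightarrow> 'a set set" where
  "path_matching V p = path_edges p \<union> (\<lambda>w. {w}) ` (V - set p)"

lemma path_matching_rev: "path_matching V (rev p) = path_matching V p"
  by (simp add: path_matching_def path_edges_rev)

lemma loops_of_path_matching:
  "distinct p \<Longrightarrow> loops_of (path_matching V p) = (\<lambda>w. {w}) ` (V - set p)"
  unfolding loops_of_def path_matching_def using card_path_edge[of p] by force

lemma loops_of_path_matching_psubset_iff:
  assumes "distinct p" "distinct q" "set p \<subseteq> V" "set q \<subseteq> V"
  shows "loops_of (path_matching V q) \<subset> loops_of (path_matching V p) \<longleftrightarrow> set p \<subset> set q"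
proof -
  have "(\<lambda>w. {w}) ` A \<subset> (\<lambda>w. {w}) ` B \<longleftrightarrow> A \<subset> B" for A B :: "'a set"
    by (auto simp: inj_image_subset_iff inj_def psubset_eq)
  moreover have "V - set q \<subset> V - set p \<longleftrightarrow> set p \<subset> set q" using assms(3,4) by blast
  ultimately show ?thesis by (simp add: loops_of_path_matching assms(1,2))
qed

lemma card_path_matching:
  assumes "finite V" "distinct p" "p \<noteq> []" "set p \<subseteq> V"
  shows "card (path_matching V p) = card V - 1"
proof -
  have "path_edges p \<inter> (\<lambda>w. {w}) ` (V - set p) = {}" using card_path_edge[OF assms(2)] by force
  then have "card (path_matching V p) = card (path_edges p) + card (V - set p)"
    unfolding path_matching_def using assms(1)
    by (simp add: card_Un_disjoint finite_path_edges card_image)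
  also have "\<dots> = (length p - 1) + (card V - length p)"
    using card_path_edges[OF assms(2)] card_Diff_subset[OF _ assms(4)] distinct_card[OF assms(2)]
    by simp
  also have "\<dots> = card V - 1"
    using card_mono[OF assms(1,4)] distinct_card[OF assms(2)] assms(3) by (cases p) auto
  finally show ?thesis .
qed

lemma two_matching_path_matching:
  assumes "is_path E p" "set p \<subseteq> V"
  shows "two_matching V E (path_matching V p)"
  unfolding two_matching_def
proof (intro conjI ballI)
  show "path_matching V p \<subseteq> loop_edges V E"
    using path_edges_subset[OF assms(1)] unfolding path_matching_def loop_edges_def by blast
next
  fix w assume "w \<in> V"
  have "distinct p" using assms(1) by (simp add: is_path_def)
  have "{e \<in> path_matching V p. w \<in> e \<and> card e = 2} = {e \<in> path_edges p. w \<in> e}"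
    using card_path_edge[OF \<open>distinct p\<close>] unfolding path_matching_def by auto
  moreover have "{w} \<in> path_matching V p \<longleftrightarrow> w \<notin> set p"
    using card_path_edge[OF \<open>distinct p\<close>] \<open>w \<in> V\<close> unfolding path_matching_def by force
  moreover have "card {e \<in> path_edges p. w \<in> e} = 0" if "w \<notin> set p"
    using path_edges_avoid[OF that] by (metis (no_types, lifting) card.empty empty_Collect_eq)
  ultimately show "mdeg (path_matching V p) w \<le> 2"
    using card_path_edges_at_vertex[OF \<open>distinct p\<close>, of w] unfolding mdeg_def by fastforce
qed

lemma two_matching_loop_vertex_isolated:
  assumes "two_matching V E M" "finite M" "w \<in> V" "{w} \<in> M" "e \<in> M" "card e = 2"
  shows "w \<notin> e"
proof
  assume "w \<in> e"
  then have "card {e \<in> M. w \<in> e \<and> card e = 2} \<noteq> 0" using assms(2,5,6) by auto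
  then have "2 < mdeg M w" using assms(4) unfolding mdeg_def by simp
  then show False using assms(1,3) unfolding two_matching_def by fastforce
qed

lemma two_matching_edge_degree:
  assumes "two_matching V E M" "finite M" "\<forall>e\<in>E. card e = 2" "\<Union>E \<subseteq> V"
  shows "card {e \<in> M \<inter> E. w \<in> e} \<le> 2"
proof (cases "w \<in> V")
  case True
  have "card {e \<in> M \<inter> E. w \<in> e} \<le> card {e \<in> M. w \<in> e \<and> card e = 2}"
    using assms(2,3) by (intro card_mono) auto
  also have "\<dots> \<le> mdeg M w" unfolding mdeg_def by simp
  also have "\<dots> \<le> 2" using assms(1) True unfolding two_matching_def by blast
  finally show ?thesis .
next
  case False
  then have "{e \<in> M \<inter> E. w \<in> e} = {}" using assms(4) by blast
  then show ?thesis by (metis card.empty zero_le)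
qed

lemma tree_two_matching_cases:
  assumes "is_tree V E" "two_matching V E M" "card M = card V - 1"
  obtains "M \<subseteq> (\<lambda>w. {w}) ` V"
    | q where "is_path E q" "2 \<le> length q" "M = path_matching V q"
proof -
  note T = is_treeD[OF assms(1)]
  define F where "F = M \<inter> E"
  define L where "L = {w \<in> V. {w} \<in> M}"
  have M_split: "M = F \<union> (\<lambda>w. {w}) ` L"
    using assms(2) unfolding two_matching_def loop_edges_def F_def L_def by blast
  have F2: "\<forall>e\<in>F. card e = 2" using T(3) unfolding F_def by blast
  have fin: "finite F" "finite L" using T(1,2) unfolding F_def L_def by auto
  then have "finite M" by (subst M_split) simp
  have finU: "finite (\<Union>F)" using finite_Union_card2[OF fin(1) F2] .
  have card_M: "card M = card F + card L"
    using F2 fin by (subst M_split, subst card_Un_disjoint) (auto simp: card_image)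
  have L_disj: "L \<inter> \<Union>F = {}"
    using two_matching_loop_vertex_isolated[OF assms(2) \<open>finite M\<close>] F2 unfolding F_def L_def by blast
  have L_sub: "L \<subseteq> V" "\<Union>F \<subseteq> V" using T(4) unfolding F_def L_def by auto
  have card_LF: "card L + card (\<Union>F) \<le> card V"
    using card_mono[OF T(1), of "L \<union> \<Union>F"] L_disj L_sub fin(2) finU by (simp add: card_Un_disjoint)
  show thesis
  proof (cases "F = {}")
    case True
    then show thesis using that(1) M_split unfolding L_def by blast
  next
    case False
    have deg: "card {e \<in> F. w \<in> e} \<le> 2" for w
      using two_matching_edge_degree[OF assms(2) \<open>finite M\<close> T(3,4)] unfolding F_def .
    have acyc: "acyclic_graph F" using acyclic_mono[OF T(5)] unfolding F_def by blast
    show thesis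
    proof (cases rule: linear_forest_path_or_sparse[OF fin(1) F2 acyc deg False])
      case (1 q)
      have dq: "distinct q" using 1(1) by (simp add: is_path_def)
      have set_q: "set q = \<Union>F" using Union_path_edges[OF 1(2)] 1(3) by simp
      have "card F = length q - 1" using 1(3) card_path_edges[OF dq] by simp
      then have "card L = card V - length q"
        using card_M card_LF assms(3) set_q distinct_card[OF dq] 1(2) by simp
      also have "\<dots> = card (V - set q)"
        using card_Diff_subset[of "set q" V] set_q L_sub(2) distinct_card[OF dq] finU by simp
      finally have "L = V - set q"
        using card_subset_eq[of "V - set q" L] T(1) L_disj L_sub(1) set_q by blast
      moreover have "is_path E q" using is_path_mono[OF 1(1)] unfolding F_def by blast
      ultimately show thesis using that(2) 1(2,3) M_split unfolding path_matching_def by blast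
    next
      case 2
      then show thesis using card_M card_LF assms(3) by linarith
    qed
  qed
qed

section \<open>Minimal 2-matchings with n - 1 edges\<close>

lemma extend_path_at_non_leaf:
  assumes "is_tree V E" "is_path E q" "2 \<le> length q" "\<not> is_leaf V E (hd q)"
  obtains x where "is_path E (x # q)"
proof -
  note T = is_treeD[OF assms(1)]
  have hd_q: "hd q = q ! 0" using assms(3) by (cases q) auto
  have "hd q \<in> V" using tree_path_subset[OF assms(1-3)] assms(3) by (cases q) auto
  define e0 where "e0 = {q ! 0, q ! 1}"
  let ?S = "{e \<in> E. hd q \<in> e}"
  have "e0 \<in> ?S" using assms(2,3) hd_q unfolding e0_def is_path_def by auto
  have "card ?S \<noteq> 1" using assms(4) \<open>hd q \<in> V\<close> by (simp add: is_leaf_def)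
  have "\<exists>e\<in>?S. e \<noteq> e0"
  proof (rule ccontr)
    assume "\<not> (\<exists>e\<in>?S. e \<noteq> e0)"
    then have "?S = {e0}" using \<open>e0 \<in> ?S\<close> by blast
    then show False using \<open>card ?S \<noteq> 1\<close> by simp
  qed
  then obtain e where e: "e \<in> E" "hd q \<in> e" "e \<noteq> e0" by blast
  have "card e = 2" using T(3) e(1) by blast
  show thesis
  proof (cases rule: edge_at_path_hd[OF T(5) e(1) \<open>card e = 2\<close> assms(2,3) e(2)])
    case 1
    then show thesis using e(3) unfolding e0_def by simp
  next
    case (2 x)
    then show thesis using that by blast
  qed
qed

lemma min_two_matchings_iff:
  "M \<in> min_two_matchings V E j \<longleftrightarrow> two_matching V E M \<and> card M = j \<and>
     \<not> (\<exists>M'. two_matching V E M' \<and> card M' = j \<and> loops_of M' \<subset> loops_of M)"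
  unfolding min_two_matchings_def by auto

lemma leaf_hd_if_path_matching_minimal:
  assumes "is_tree V E" "is_path E p" "2 \<le> length p"
    and "path_matching V p \<in> min_two_matchings V E (card V - 1)"
  shows "is_leaf V E (hd p)"
proof (rule ccontr)
  assume "\<not> is_leaf V E (hd p)"
  then obtain x where x: "is_path E (x # p)" using extend_path_at_non_leaf assms(1-3) by blast
  have "set (x # p) \<subseteq> V" using tree_path_subset[OF assms(1) x] assms(3) by simp
  have "distinct p" "distinct (x # p)" using assms(2) x by (simp_all add: is_path_def)
  have "set p \<subset> set (x # p)" using \<open>distinct (x # p)\<close> by auto
  then have "loops_of (path_matching V (x # p)) \<subset> loops_of (path_matching V p)"
    using loops_of_path_matching_psubset_iff[of p "x # p" V] \<open>distinct p\<close> \<open>distinct (x # p)\<close>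
      \<open>set (x # p) \<subseteq> V\<close> by simp
  moreover have "two_matching V E (path_matching V (x # p))"
    using two_matching_path_matching[OF x \<open>set (x # p) \<subseteq> V\<close>] .
  moreover have "card (path_matching V (x # p)) = card V - 1"
    using card_path_matching[OF is_treeD(1)[OF assms(1)] \<open>distinct (x # p)\<close> _ \<open>set (x # p) \<subseteq> V\<close>]
    by simp
  ultimately show False using assms(4) unfolding min_two_matchings_iff by blast
qed

lemma path_matching_minimal_iff:
  assumes "is_tree V E" "is_path E p" "2 \<le> length p"
  shows "path_matching V p \<in> min_two_matchings V E (card V - 1) \<longleftrightarrow>
    is_leaf V E (hd p) \<and> is_leaf V E (last p)"
proof
  assume min: "path_matching V p \<in> min_two_matchings V E (card V - 1)"
  show "is_leaf V E (hd p) \<and> is_leaf V E (last p)"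
    using leaf_hd_if_path_matching_minimal[OF assms min]
      leaf_hd_if_path_matching_minimal[OF assms(1) is_path_rev[OF assms(2)]] min assms(3)
    by (simp add: path_matching_rev hd_rev)
next
  assume leaves: "is_leaf V E (hd p) \<and> is_leaf V E (last p)"
  note T = is_treeD[OF assms(1)]
  have dp: "distinct p" using assms(2) by (simp add: is_path_def)
  have sp: "set p \<subseteq> V" using tree_path_subset[OF assms] .
  have card_pm: "card (path_matching V p) = card V - 1"
    using card_path_matching[OF T(1) dp _ sp] assms(3) by fastforce
  have not_smaller: False
    if M': "two_matching V E M'" "card M' = card V - 1" "loops_of M' \<subset> loops_of (path_matching V p)"
    for M'
    using assms(1) M'(1,2)
  proof (cases rule: tree_two_matching_cases)
    case 1
    then have "loops_of M' = M'" unfolding loops_of_def by auto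
    then have "M' \<subset> (\<lambda>w. {w}) ` (V - set p)" using M'(3) loops_of_path_matching[OF dp] by simp
    then have "card M' < card (V - set p)"
      using T(1) psubset_card_mono[of "(\<lambda>w. {w}) ` (V - set p)" M'] by (simp add: card_image)
    also have "\<dots> = card V - length p" using card_Diff_subset[OF _ sp] distinct_card[OF dp] by simp
    finally show False using M'(2) assms(3) by linarith
  next
    case (2 q)
    have dq: "distinct q" using 2(1) by (simp add: is_path_def)
    have "set p \<subset> set q"
      using M'(3) 2(3) loops_of_path_matching_psubset_iff[OF dp dq sp tree_path_subset[OF assms(1) 2(1,2)]]
      by simp
    then have "hd p \<in> set q" "last p \<in> set q" using assms(3) by (cases p; auto)+
    then have ends: "hd p \<in> {hd q, last q}" "last p \<in> {hd q, last q}"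
      using leaf_in_path_is_end[OF _ 2(1)] leaves by auto
    have "hd p \<noteq> last p" using two_le_length_path_iff[OF assms(2)] assms(3) by simp
    then have "p = q \<or> p = rev q"
      using ends acyclic_path_unique[OF T(5) assms(2)] 2(1) is_path_rev[OF 2(1)] 2(2)
      by (auto simp: hd_rev last_rev)
    then show False using \<open>set p \<subset> set q\<close> by auto
  qed
  show "path_matching V p \<in> min_two_matchings V E (card V - 1)"
    unfolding min_two_matchings_iff
    using two_matching_path_matching[OF assms(2) sp] card_pm not_smaller by blast
qed

lemma loop_matching_not_minimal:
  assumes "is_tree V E" "2 \<le> card V" "M \<subseteq> (\<lambda>w. {w}) ` V"
  shows "M \<notin> min_two_matchings V E (card V - 1)"
proof
  assume min: "M \<in> min_two_matchings V E (card V - 1)"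
  note T = is_treeD[OF assms(1)]
  define L where "L = {w \<in> V. {w} \<in> M}"
  have M: "M = (\<lambda>w. {w}) ` L" using assms(3) unfolding L_def by blast
  have "card L = card V - 1" using min M by (simp add: min_two_matchings_iff card_image)
  then have "L \<noteq> V" using assms(2) by auto
  then obtain w where w: "w \<in> V" "w \<notin> L" unfolding L_def by blast
  then have L: "L = V - {w}"
    using card_subset_eq[of "V - {w}" L] T(1) \<open>card L = card V - 1\<close> unfolding L_def by auto
  obtain x where x: "x \<noteq> w" "{w, x} \<in> E" using tree_ex_neighbour[OF assms(1,2) w(1)] .
  have path: "is_path E [w, x]" using is_path_pair[OF x(1)[symmetric] x(2)] .
  have sub: "set [w, x] \<subseteq> V" using tree_path_subset[OF assms(1) path] by simp
  have "loops_of (path_matching V [w, x]) \<subset> loops_of M"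
    using loops_of_path_matching[of "[w, x]" V] x(1) sub M L unfolding loops_of_def by auto
  moreover have "card (path_matching V [w, x]) = card V - 1"
    using card_path_matching[OF T(1) _ _ sub] x(1) by simp
  ultimately show False
    using min two_matching_path_matching[OF path sub] unfolding min_two_matchings_iff by blast
qed

theorem proposition4p9:
  fixes V :: "'a set" and E :: "'a set set" and n :: nat
  assumes "is_tree V E" and "card V = n" and "n \<ge> 2"
  shows "min_two_matchings V E (n - 1) =
    {path_edges p \<union> (\<lambda>w. {w}) ` (V - set p) | p u v.
       is_leaf V E u \<and> is_leaf V E v \<and> u \<noteq> v \<and>
       is_path E p \<and> hd p = u \<and> last p = v}"
    (is "_ = ?leaf_paths")
proof (intro set_eqI iffI)
  fix M assume M: "M \<in> min_two_matchings V E (n - 1)"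
  have matching: "two_matching V E M" "card M = card V - 1"
    using M assms(2) by (simp_all add: min_two_matchings_iff)
  show "M \<in> ?leaf_paths"
  proof (cases rule: tree_two_matching_cases[OF assms(1) matching])
    case 1
    then show ?thesis using loop_matching_not_minimal[OF assms(1)] M assms(2,3) by simp
  next
    case (2 q)
    then have "is_leaf V E (hd q)" "is_leaf V E (last q)" "hd q \<noteq> last q"
      using path_matching_minimal_iff[OF assms(1) 2(1,2)] M assms(2) two_le_length_path_iff[OF 2(1)]
      by simp_all
    then show ?thesis using 2 unfolding path_matching_def by blast
  qed
next
  fix M assume "M \<in> ?leaf_paths"
  then obtain p where p: "M = path_matching V p" "is_path E p"
    "is_leaf V E (hd p)" "is_leaf V E (last p)" "hd p \<noteq> last p"
    unfolding path_matching_def by blast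
  then have "2 \<le> length p" using two_le_length_path_iff by blast
  then show "M \<in> min_two_matchings V E (n - 1)"
    using path_matching_minimal_iff[OF assms(1) p(2)] p assms(2) by simp
qed

end
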